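(* For all positive integers $m,k,r$ and all complex $z$ with $|z|<1$, $$\sum_{\substack{k_1+\cdots+k_r=k+r-1\\ k_1,\ldots,k_r\ge1}}\binom{k_r+m-2}{m-1}\mathrm{A}(k_1,\ldots,k_{r-1},k_r+m-1;z)+(-1)^r\sum_{\substack{k_1+\cdots+k_r=m+r-1\\ k_1,\ldots,k_r\ge1}}\binom{k_r+k-2}{k-1}\mathrm{A}(k_1,\ldots,k_{r-1},k_r+k-1;z)$$ $$=\sum_{j=1}^{r-1}(-1)^{j-1}\,\mathrm{A}(\{1\}_{r-1-j},m;z)\,\mathrm{A}(\{1\}_{j-1},k;z).$$
   Context: $\{1\}_a$ denotes the sequence of $a$ ones. For positive integers $k_1,\dots,k_r$ and $|z|<1$, the Kaneko–Tsumura level-two multiple polylogarithm is $\mathrm{A}(k_1,\ldots,k_r;z):=2^r\sum\frac{z^{n_r}}{n_1^{k_1}n_2^{k_2}\cdots n_r^{k_r}}$, summed over integers $1\le n_1<n_2<\cdots<n_r$ with $n_j\equiv j \pmod 2$ for every $j$. *)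

theory Defs
  imports "HOL-Analysis.Analysis"
begin

text \<open>Admissible index tuples (n_1,...,n_r), written as a list of length r:
  1 <= n_1 < n_2 < ... < n_r with n_j == j (mod 2) (indices are 1-based, so list
  position i corresponds to j = i+1).\<close>
definition KT_indices :: "nat \<Rightarrow> nat list set" where
  "KT_indices r = {ns. length ns = r \<and> sorted_wrt (<) ns \<and> (\<forall>n\<in>set ns. 1 \<le> n)
     \<and> (\<forall>i<r. ns ! i mod 2 = (i + 1) mod 2)}"

definition KT_A :: "nat list \<Rightarrow> complex \<Rightarrow> complex" where
  "KT_A ks z = 2 ^ length ks *
     (\<Sum>\<^sub>\<infinity> ns \<in> KT_indices (length ks).
        z ^ (if ns = [] then 0 else last ns) /
        (\<Prod>i<length ks. of_nat (ns ! i) ^ (ks ! i)))"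

definition compositions :: "nat \<Rightarrow> nat \<Rightarrow> nat list set" where
  "compositions n r = {ks. length ks = r \<and> (\<forall>x\<in>set ks. 1 \<le> x) \<and> sum_list ks = n}"

end

theory Submission
  imports Defs
begin

(* All coefficients of A(k_1,...,k_r; z) are nonnegative, and raising k_r only shrinks them,
   while A(k_1,...,k_{r-1},0; z) = 2z/(1-z^2) A(k_1,...,k_{r-1}; z). So every A is a power series
   of radius at least 1 and the identity can be proved for formal power series.
   There the Euler operator theta = z d/dz lowers the last index: theta A(...,k+1) = A(...,k) and
   theta A(...,1) = 2z/(1-z^2) A(...). Both sides of the identity have no constant term, and theta
   maps each side for (m+1, k+1) to the sum of the sides for (m, k+1) and (m+1, k): on the left
   by Pascal's rule for the binomial weights, on the right by the Leibniz rule. As theta is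
   injective on series without constant term, induction on m + k and the symmetry m <-> k reduce
   the identity to m = 1. Then the left side is the sum of A over all compositions, which a second
   theta-induction identifies with sum_j (-1)^j A({1}_(r-1-j)) A({1}_j, k), using
   sum_j (-1)^j A({1}_(n-j)) A({1}_j) = 0 for n > 0. *)

section \<open>The Euler operator on formal power series\<close>

definition fps_theta :: "'a::comm_ring_1 fps \<Rightarrow> 'a fps" where
  "fps_theta f = fps_X * fps_deriv f"

lemma fps_theta_nth [simp]: "fps_nth (fps_theta f) n = of_nat n * fps_nth f n"
  by (cases n) (simp_all add: fps_theta_def)

lemma fps_theta_add: "fps_theta (f + g) = fps_theta f + fps_theta g"
  by (simp add: fps_theta_def algebra_simps)

lemma fps_theta_mult: "fps_theta (f * g) = fps_theta f * g + f * fps_theta g"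
  by (simp add: fps_theta_def algebra_simps)

lemma fps_theta_sum: "fps_theta (\<Sum>x\<in>A. f x) = (\<Sum>x\<in>A. fps_theta (f x))"
  by (induction A rule: infinite_finite_induct) (simp_all add: fps_theta_def distrib_left)

lemma fps_theta_0 [simp]: "fps_theta 0 = 0"
  by (simp add: fps_theta_def)

lemma fps_theta_uminus [simp]: "fps_theta (- f) = - fps_theta f"
  by (simp add: fps_theta_def)

lemma fps_theta_1 [simp]: "fps_theta 1 = 0"
  by (simp add: fps_theta_def)

lemma fps_theta_of_nat [simp]: "fps_theta (of_nat n) = 0"
  by (simp add: fps_theta_def flip: fps_of_nat)

lemma fps_theta_neg_one_power [simp]: "fps_theta ((-1) ^ n) = 0"
  by (induction n) (simp_all add: fps_theta_mult)

lemma fps_eqI_theta: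
  fixes f g :: "'a::{idom,ring_char_0} fps"
  assumes "fps_theta f = fps_theta g" and "fps_nth f 0 = fps_nth g 0"
  shows "f = g"
proof (rule fps_ext)
  fix n
  show "fps_nth f n = fps_nth g n"
  proof (cases n)
    case (Suc n')
    from arg_cong[OF assms(1), of "\<lambda>h. fps_nth h n"] show ?thesis
      by (simp add: Suc del: of_nat_Suc)
  qed (use assms in simp)
qed

lemma fps_conv_radius_le_if_norm_le:
  fixes f g :: "'a::{banach,real_normed_div_algebra} fps"
  assumes "\<And>n. norm (fps_nth f n) \<le> norm (fps_nth g n)"
  shows "fps_conv_radius g \<le> fps_conv_radius f"
  unfolding fps_conv_radius_def
proof (rule conv_radius_geI_ex')
  fix r :: real assume r: "0 < r" "ereal r < conv_radius (fps_nth g)"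
  have "summable (\<lambda>n. norm (fps_nth g n * of_real r ^ n))"
    by (rule abs_summable_in_conv_radius) (use r in simp)
  then show "summable (\<lambda>n. fps_nth f n * of_real r ^ n)"
    by (rule summable_comparison_test[rotated])
      (auto simp: norm_mult intro!: exI[of _ 0] mult_right_mono assms)
qed

lemma fps_conv_radius_sum_gt:
  fixes f :: "'b \<Rightarrow> 'a::{banach,real_normed_div_algebra} fps"
  assumes "\<And>x. x \<in> A \<Longrightarrow> ereal c < fps_conv_radius (f x)"
  shows "ereal c < fps_conv_radius (\<Sum>x\<in>A. f x)"
  using assms
proof (induction A rule: infinite_finite_induct)
  case (insert x F)
  then have "ereal c < min (fps_conv_radius (f x)) (fps_conv_radius (sum f F))"
    by simp
  also have "\<dots> \<le> fps_conv_radius (f x + sum f F)"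
    by (rule fps_conv_radius_add)
  finally show ?case
    using insert(1,2) by simp
qed simp_all

lemma fps_conv_radius_mult_gt:
  fixes f g :: "'a::{banach,real_normed_div_algebra} fps"
  assumes "ereal c < fps_conv_radius f" and "ereal c < fps_conv_radius g"
  shows "ereal c < fps_conv_radius (f * g)"
proof -
  have "ereal c < min (fps_conv_radius f) (fps_conv_radius g)"
    using assms by simp
  then show ?thesis
    using fps_conv_radius_mult by (rule less_le_trans)
qed

lemma eval_fps_sum:
  fixes f :: "'b \<Rightarrow> 'a::{banach,real_normed_div_algebra} fps"
  assumes "\<And>x. x \<in> A \<Longrightarrow> norm z < fps_conv_radius (f x)"
  shows "eval_fps (\<Sum>x\<in>A. f x) z = (\<Sum>x\<in>A. eval_fps (f x) z)"
  using assms
proof (induction A rule: infinite_finite_induct)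
  case (insert x F)
  then show ?case
    by (simp add: eval_fps_add fps_conv_radius_sum_gt)
qed simp_all

lemma fps_neg_one_power: "(-1 :: 'a::comm_ring_1 fps) ^ n = fps_const ((-1) ^ n)"
  by (metis fps_const_1_eq_1 fps_const_neg fps_const_power)

lemma has_sum_finite_fibers:
  fixes f :: "'a \<Rightarrow> 'b::banach" and h :: "'a \<Rightarrow> nat"
  assumes fin: "\<And>N. finite {x \<in> A. h x = N}"
    and summable: "summable (\<lambda>N. \<Sum>x\<in>{x \<in> A. h x = N}. norm (f x))"
  shows "(f has_sum (\<Sum>N. \<Sum>x\<in>{x \<in> A. h x = N}. f x)) A"
proof -
  define B where "B N = {x \<in> A. h x = N}" for N
  define g where "g N = (\<Sum>x\<in>B N. f x)" for N
  have norm_summable: "summable (\<lambda>N. norm (g N))"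
    by (rule summable_comparison_test'[OF summable[folded B_def]]) (simp add: g_def norm_sum)
  have "(g has_sum (\<Sum>N. g N)) UNIV"
    by (rule norm_summable_imp_has_sum[OF norm_summable summable_sums])
      (rule summable_norm_cancel[OF norm_summable])
  moreover have "(\<lambda>p. f (snd p)) summable_on Sigma UNIV B"
  proof (rule abs_summable_summable)
    have "(\<lambda>N. \<Sum>x\<in>B N. norm (f x)) summable_on UNIV"
      using summable by (subst summable_on_UNIV_nonneg_real_iff) (auto simp: B_def sum_nonneg)
    then show "(\<lambda>p. norm (f (snd p))) summable_on Sigma UNIV B"
      by (subst Infinite_Sum.abs_summable_on_Sigma_iff) (simp add: fin B_def sum_nonneg)
  qed
  ultimately have "((\<lambda>p. f (snd p)) has_sum (\<Sum>N. g N)) (Sigma UNIV B)"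
    by (intro has_sum_SigmaI[where g = g]) (auto simp: g_def fin B_def intro: has_sum_finiteI)
  moreover have "bij_betw (\<lambda>x. (h x, x)) A (Sigma UNIV B)"
    by (auto simp: bij_betw_def inj_on_def B_def image_iff)
  ultimately show ?thesis
    by (simp add: has_sum_reindex_bij_betw[symmetric] g_def B_def)
qed

lemma length_le_sum_list: "\<forall>x\<in>set ks. 1 \<le> x \<Longrightarrow> length ks \<le> sum_list ks"
  by (induction ks) auto

lemma finite_compositions: "finite (compositions n r)"
proof (rule finite_subset)
  show "compositions n r \<subseteq> {ks. set ks \<subseteq> {..n} \<and> length ks = r}"
    by (auto simp: compositions_def intro: member_le_sum_list)
qed (rule finite_lists_length_eq, simp)

lemma compositions_0: "compositions (Suc n) 0 = {}"
  by (auto simp: compositions_def)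

lemma compositions_self: "compositions r r = {replicate r 1}"
proof -
  have "ks = replicate (length ks) 1"
    if "\<forall>x\<in>set ks. 1 \<le> x" "sum_list ks = length ks" for ks :: "nat list"
    using that
  proof (induction ks)
    case (Cons x xs)
    with length_le_sum_list[of xs] show ?case by auto
  qed simp
  then show ?thesis
    by (auto simp: compositions_def sum_list_replicate)
qed

lemma compositions_Suc_nonempty: "ks \<in> compositions n (Suc r) \<Longrightarrow> ks \<noteq> []"
  by (auto simp: compositions_def)

definition incr_last :: "nat list \<Rightarrow> nat list" where
  "incr_last ks = butlast ks @ [Suc (last ks)]"

lemma compositions_Suc_Suc:
  "compositions (Suc n) (Suc r) =
     (\<lambda>ks. ks @ [1]) ` compositions n r \<union> incr_last ` compositions n (Suc r)"
proof (intro equalityI subsetI)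
  fix ks assume ks: "ks \<in> compositions (Suc n) (Suc r)"
  then obtain xs x where eq: "ks = xs @ [x]"
    by (metis compositions_Suc_nonempty rev_exhaust)
  with ks have xs: "\<forall>y\<in>set xs. 1 \<le> y" "length xs = r" "sum_list xs + x = Suc n" "1 \<le> x"
    by (auto simp: compositions_def)
  show "ks \<in> (\<lambda>ks. ks @ [1]) ` compositions n r \<union> incr_last ` compositions n (Suc r)"
  proof (cases "x = 1")
    case True
    with xs have "xs \<in> compositions n r" by (auto simp: compositions_def)
    with True eq show ?thesis by blast
  next
    case False
    with xs have "xs @ [x - 1] \<in> compositions n (Suc r)" by (auto simp: compositions_def)
    moreover have "ks = incr_last (xs @ [x - 1])" using eq xs(4) False by (simp add: incr_last_def)
    ultimately show ?thesis by blast
  qed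
next
  fix ks assume "ks \<in> (\<lambda>ks. ks @ [1]) ` compositions n r \<union> incr_last ` compositions n (Suc r)"
  then show "ks \<in> compositions (Suc n) (Suc r)"
  proof (elim UnE imageE)
    fix xs assume "xs \<in> compositions n (Suc r)" "ks = incr_last xs"
    moreover from this(1) obtain ys y where "xs = ys @ [y]"
      by (metis compositions_Suc_nonempty rev_exhaust)
    ultimately show ?thesis by (auto simp: compositions_def incr_last_def)
  qed (auto simp: compositions_def)
qed

lemma sum_compositions_Suc_Suc:
  "(\<Sum>ks\<in>compositions (Suc n) (Suc r). f ks) =
     (\<Sum>ks\<in>compositions n r. f (ks @ [1])) + (\<Sum>ks\<in>compositions n (Suc r). f (incr_last ks))"
proof -
  have last_incr_last: "last (incr_last ks) \<noteq> 1" if "ks \<in> compositions n (Suc r)" for ks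
    using that last_in_set[OF compositions_Suc_nonempty[OF that]]
    by (fastforce simp: compositions_def incr_last_def)
  have "inj_on incr_last (compositions n (Suc r))"
  proof (rule inj_onI)
    fix xs ys assume "xs \<in> compositions n (Suc r)" "ys \<in> compositions n (Suc r)"
      and "incr_last xs = incr_last ys"
    then show "xs = ys"
      by (metis compositions_Suc_nonempty append_butlast_last_id butlast_snoc last_snoc
          incr_last_def nat.inject)
  qed
  moreover have "(\<lambda>ks. ks @ [1]) ` compositions n r \<inter> incr_last ` compositions n (Suc r) = {}"
    by auto (metis last_incr_last last_snoc One_nat_def)
  ultimately show ?thesis
    by (simp add: compositions_Suc_Suc sum.union_disjoint finite_compositions sum.reindex
        inj_on_def)
qed

section \<open>The generating series of \<open>A\<close>\<close>

text \<open>\<open>kt_coeff ks N\<close> is the coefficient of \<open>z ^ N\<close> in \<open>A(ks; z)\<close>. The recursion runs over the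
  last summation index \<open>n\<^sub>r = N\<close>, hence it is stated on the reversed list.\<close>

fun kt_coeff_rev :: "nat list \<Rightarrow> nat \<Rightarrow> real" where
  "kt_coeff_rev [] N = (if N = 0 then 1 else 0)"
| "kt_coeff_rev (k # ks) N =
     (if N mod 2 = Suc (length ks) mod 2 then 2 / real N ^ k * (\<Sum>M<N. kt_coeff_rev ks M) else 0)"

definition kt_coeff :: "nat list \<Rightarrow> nat \<Rightarrow> real" where
  "kt_coeff ks = kt_coeff_rev (rev ks)"

lemma kt_coeff_Nil: "kt_coeff [] N = (if N = 0 then 1 else 0)"
  by (simp add: kt_coeff_def)

lemma kt_coeff_snoc:
  "kt_coeff (ks @ [k]) N =
     (if N mod 2 = Suc (length ks) mod 2 then 2 / real N ^ k * (\<Sum>M<N. kt_coeff ks M) else 0)"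
  by (simp add: kt_coeff_def)

lemma kt_coeff_parity: "kt_coeff ks N \<noteq> 0 \<Longrightarrow> N mod 2 = length ks mod 2"
  by (induction ks arbitrary: N rule: rev_induct)
    (auto simp: kt_coeff_Nil kt_coeff_snoc split: if_splits)

lemma kt_coeff_nonneg: "0 \<le> kt_coeff ks N"
  by (induction ks arbitrary: N rule: rev_induct)
    (auto simp: kt_coeff_Nil kt_coeff_snoc intro!: sum_nonneg divide_nonneg_nonneg)

definition kt_fps :: "nat list \<Rightarrow> complex fps" where
  "kt_fps ks = Abs_fps (\<lambda>N. of_real (kt_coeff ks N))"

text \<open>The series of \<open>2z / (1 - z\<^sup>2)\<close>.\<close>

definition twice_odd_fps :: "complex fps" where
  "twice_odd_fps = Abs_fps (\<lambda>i. if odd i then 2 else 0)"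

lemma kt_fps_Nil: "kt_fps [] = 1"
  by (rule fps_ext) (simp add: kt_fps_def kt_coeff_Nil)

lemma kt_fps_nth_0: "ks \<noteq> [] \<Longrightarrow> fps_nth (kt_fps ks) 0 = 0"
  by (induction ks rule: rev_induct) (auto simp: kt_fps_def kt_coeff_snoc)

lemma fps_theta_kt_fps_snoc_Suc: "fps_theta (kt_fps (ks @ [Suc k])) = kt_fps (ks @ [k])"
  by (rule fps_ext) (auto simp: kt_fps_def kt_coeff_snoc field_simps)

lemma kt_coeff_snoc_0_conv:
  "(\<Sum>i\<le>N. (if odd i then 2 else 0) * kt_coeff ks (N - i)) = kt_coeff (ks @ [0]) N"
proof -
  let ?P = "N mod 2 = Suc (length ks) mod 2"
  have "(\<Sum>i\<le>N. (if odd i then 2 else 0) * kt_coeff ks (N - i)) =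
        (\<Sum>M\<le>N. (if odd (N - M) then 2 else 0) * kt_coeff ks M)"
    by (subst sum.atLeastAtMost_rev[of _ 0, simplified atLeast0AtMost]) simp
  also have "\<dots> = (\<Sum>M\<le>N. if ?P \<and> M < N then 2 * kt_coeff ks M else 0)"
  proof (rule sum.cong[OF refl])
    fix M assume "M \<in> {..N}"
    \<comment> \<open>only indices of the parity of \<open>length ks\<close> contribute\<close>
    then show "(if odd (N - M) then 2 else 0) * kt_coeff ks M =
               (if ?P \<and> M < N then 2 * kt_coeff ks M else 0)"
      using kt_coeff_parity[of ks M]
      by (cases "kt_coeff ks M = 0") (auto simp: odd_iff_mod_2_eq_one; presburger)+
  qed
  also have "\<dots> = (if ?P then 2 * (\<Sum>M<N. kt_coeff ks M) else 0)"
    by (simp add: lessThan_Suc_atMost[symmetric] sum_distrib_left)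
  finally show ?thesis
    by (simp add: kt_coeff_snoc)
qed

lemma kt_fps_snoc_0: "kt_fps (ks @ [0]) = twice_odd_fps * kt_fps ks"
proof (rule fps_ext)
  fix N
  have "fps_nth (twice_odd_fps * kt_fps ks) N =
          of_real (\<Sum>i\<le>N. (if odd i then 2 else 0) * kt_coeff ks (N - i))"
    by (auto simp: fps_mult_nth twice_odd_fps_def kt_fps_def atLeast0AtMost intro!: sum.cong)
  then show "fps_nth (kt_fps (ks @ [0])) N = fps_nth (twice_odd_fps * kt_fps ks) N"
    by (simp add: kt_coeff_snoc_0_conv kt_fps_def)
qed

lemma fps_theta_kt_fps_snoc_1: "fps_theta (kt_fps (ks @ [1])) = twice_odd_fps * kt_fps ks"
  using fps_theta_kt_fps_snoc_Suc[of ks 0] by (simp add: kt_fps_snoc_0)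

section \<open>The duality for generating series\<close>

definition ones_fps :: "nat \<Rightarrow> complex fps" where
  "ones_fps n = kt_fps (replicate n 1)"

definition ones_snoc_fps :: "nat \<Rightarrow> nat \<Rightarrow> complex fps" where
  "ones_snoc_fps n k = kt_fps (replicate n 1 @ [k])"

lemma ones_fps_0: "ones_fps 0 = 1"
  by (simp add: ones_fps_def kt_fps_Nil)

lemma ones_snoc_fps_1: "ones_snoc_fps n (Suc 0) = ones_fps (Suc n)"
  by (simp add: ones_snoc_fps_def ones_fps_def replicate_append_same)

lemma ones_fps_nth_0: "n \<noteq> 0 \<Longrightarrow> fps_nth (ones_fps n) 0 = 0"
  by (simp add: ones_fps_def kt_fps_nth_0)

lemma ones_snoc_fps_nth_0: "fps_nth (ones_snoc_fps n k) 0 = 0"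
  by (simp add: ones_snoc_fps_def kt_fps_nth_0)

lemma fps_theta_ones_fps:
  "fps_theta (ones_fps n) = (if n = 0 then 0 else twice_odd_fps * ones_fps (n - 1))"
  using fps_theta_kt_fps_snoc_1[of "replicate (n - 1) 1"]
  by (cases n) (simp_all add: kt_fps_Nil ones_fps_def replicate_append_same)

lemma fps_theta_ones_snoc_fps: "fps_theta (ones_snoc_fps n (Suc k)) = ones_snoc_fps n k"
  by (simp add: ones_snoc_fps_def fps_theta_kt_fps_snoc_Suc)

lemma ones_fps_alternating_sum:
  assumes "n \<noteq> 0"
  shows "(\<Sum>j\<le>n. (-1) ^ j * ones_fps (n - j) * ones_fps j) = 0"
proof (rule fps_eqI_theta)
  obtain p where p: "n = Suc p" using assms by (cases n) auto
  have "fps_nth (ones_fps (n - j)) 0 * fps_nth (ones_fps j) 0 = 0" if "j \<le> n" for j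
    using assms that by (cases "j = 0") (simp_all add: ones_fps_nth_0)
  then show "fps_nth (\<Sum>j\<le>n. (-1) ^ j * ones_fps (n - j) * ones_fps j) 0 = fps_nth 0 0"
    by (auto simp: fps_sum_nth intro!: sum.neutral)
  \<comment> \<open>differentiating either factor gives the same sum up to sign\<close>
  have "(\<Sum>j\<le>n. (-1) ^ j * fps_theta (ones_fps (n - j)) * ones_fps j) =
        twice_odd_fps * (\<Sum>j\<le>p. (-1) ^ j * ones_fps (p - j) * ones_fps j)"
    unfolding p
    by (subst sum.atMost_Suc)
      (auto simp: fps_theta_ones_fps sum_distrib_left Suc_diff_le intro!: sum.cong)
  moreover have "(\<Sum>j\<le>n. (-1) ^ j * ones_fps (n - j) * fps_theta (ones_fps j)) =
        - twice_odd_fps * (\<Sum>j\<le>p. (-1) ^ j * ones_fps (p - j) * ones_fps j)"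
    unfolding p
    by (subst sum.atMost_Suc_shift)
      (auto simp: fps_theta_ones_fps sum_distrib_left sum_negf[symmetric] intro!: sum.cong)
  ultimately show "fps_theta (\<Sum>j\<le>n. (-1) ^ j * ones_fps (n - j) * ones_fps j) = fps_theta 0"
    by (simp add: fps_theta_sum fps_theta_mult sum.distrib algebra_simps)
qed

definition composition_fps :: "nat \<Rightarrow> nat \<Rightarrow> complex fps" where
  "composition_fps r n = (\<Sum>ks\<in>compositions n r. kt_fps ks)"

definition ones_convolution_fps :: "nat \<Rightarrow> nat \<Rightarrow> complex fps" where
  "ones_convolution_fps q k = (\<Sum>j\<le>q. (-1) ^ j * ones_fps (q - j) * ones_snoc_fps j k)"

lemma composition_fps_nth_0: "fps_nth (composition_fps (Suc r) n) 0 = 0"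
  by (auto simp: composition_fps_def fps_sum_nth kt_fps_nth_0
      dest: compositions_Suc_nonempty intro!: sum.neutral)

lemma ones_convolution_fps_nth_0: "fps_nth (ones_convolution_fps q k) 0 = 0"
  by (simp add: ones_convolution_fps_def fps_sum_nth ones_snoc_fps_nth_0)

lemma fps_theta_composition_fps:
  "fps_theta (composition_fps (Suc r) (Suc n)) =
     twice_odd_fps * composition_fps r n + composition_fps (Suc r) n"
proof -
  have "fps_theta (kt_fps (incr_last ks)) = kt_fps ks" if "ks \<in> compositions n (Suc r)" for ks
    using compositions_Suc_nonempty[OF that]
    by (simp add: incr_last_def fps_theta_kt_fps_snoc_Suc)
  then show ?thesis
    by (simp add: composition_fps_def fps_theta_sum fps_theta_add sum_compositions_Suc_Suc
        fps_theta_kt_fps_snoc_1[unfolded One_nat_def] sum_distrib_left)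
qed

lemma fps_theta_ones_convolution_fps:
  "fps_theta (ones_convolution_fps q (Suc k)) =
     (if q = 0 then 0 else twice_odd_fps * ones_convolution_fps (q - 1) (Suc k))
     + ones_convolution_fps q k"
proof -
  let ?T = "\<lambda>j. (-1) ^ j * fps_theta (ones_fps (q - j)) * ones_snoc_fps j (Suc k)"
  have "fps_theta (ones_convolution_fps q (Suc k)) = (\<Sum>j\<le>q. ?T j) + ones_convolution_fps q k"
    by (simp add: ones_convolution_fps_def fps_theta_sum fps_theta_mult fps_theta_ones_snoc_fps
        sum.distrib algebra_simps)
  also have "(\<Sum>j\<le>q. ?T j) =
      (if q = 0 then 0 else twice_odd_fps * ones_convolution_fps (q - 1) (Suc k))"
  proof (cases q)
    case (Suc q')
    then have "(\<Sum>j\<le>q. ?T j) = (\<Sum>j\<le>q'. ?T j)"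
      by (simp add: fps_theta_ones_fps)
    also have "\<dots> = twice_odd_fps * ones_convolution_fps q' (Suc k)"
      unfolding ones_convolution_fps_def sum_distrib_left
      by (rule sum.cong[OF refl]) (auto simp: Suc fps_theta_ones_fps Suc_diff_le)
    finally show ?thesis by (simp add: Suc)
  qed (simp add: fps_theta_ones_fps)
  finally show ?thesis .
qed

lemma ones_convolution_fps_1: "ones_convolution_fps q (Suc 0) = ones_fps (Suc q)"
proof -
  have "0 = (\<Sum>j\<le>Suc q. (-1) ^ j * ones_fps (Suc q - j) * ones_fps j)"
    using ones_fps_alternating_sum[of "Suc q"] by simp
  also have "\<dots> = ones_fps (Suc q) - ones_convolution_fps q (Suc 0)"
    by (subst sum.atMost_Suc_shift)
      (simp add: ones_fps_0 ones_convolution_fps_def ones_snoc_fps_1 sum_negf[symmetric])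
  finally show ?thesis by simp
qed

text \<open>The case \<open>m = 1\<close> of the duality: the sum of \<open>A\<close> over all compositions.\<close>

lemma composition_fps_eq_ones_convolution:
  "composition_fps (Suc q) (p + q + 1) = ones_convolution_fps q (Suc p)"
proof (induction p arbitrary: q)
  case 0
  show ?case
    by (simp add: composition_fps_def compositions_self ones_convolution_fps_1 ones_fps_def
        del: replicate_Suc)
next
  case (Suc p)
  note outer_IH = Suc.IH
  show ?case
  proof (induction q)
    case 0
    show ?case
    proof (rule fps_eqI_theta)
      show "fps_theta (composition_fps (Suc 0) (Suc p + 0 + 1)) =
            fps_theta (ones_convolution_fps 0 (Suc (Suc p)))"
        using fps_theta_composition_fps[of 0 "Suc p"] outer_IH[of 0]
        by (simp add: fps_theta_ones_convolution_fps composition_fps_def compositions_0)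
    qed (simp add: composition_fps_nth_0 ones_convolution_fps_nth_0)
  next
    case (Suc q)
    show ?case
    proof (rule fps_eqI_theta)
      show "fps_theta (composition_fps (Suc (Suc q)) (Suc p + Suc q + 1)) =
            fps_theta (ones_convolution_fps (Suc q) (Suc (Suc p)))"
        using fps_theta_composition_fps[of "Suc q" "Suc p + Suc q"] Suc.IH outer_IH[of "Suc q"]
        by (simp add: fps_theta_ones_convolution_fps)
    qed (simp add: composition_fps_nth_0 ones_convolution_fps_nth_0)
  qed
qed

definition binom_composition_fps :: "nat \<Rightarrow> nat \<Rightarrow> nat \<Rightarrow> complex fps" where
  "binom_composition_fps m k r = (\<Sum>ks\<in>compositions (k + r - 1) r.
     of_nat ((last ks + m - 2) choose (m - 1)) * kt_fps (butlast ks @ [last ks + m - 1]))"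

definition duality_lhs_fps :: "nat \<Rightarrow> nat \<Rightarrow> nat \<Rightarrow> complex fps" where
  "duality_lhs_fps m k r = binom_composition_fps m k r + (-1) ^ r * binom_composition_fps k m r"

definition duality_rhs_fps :: "nat \<Rightarrow> nat \<Rightarrow> nat \<Rightarrow> complex fps" where
  "duality_rhs_fps m k r =
     (\<Sum>j=1..r-1. (-1) ^ (j - 1) * ones_snoc_fps (r - 1 - j) m * ones_snoc_fps (j - 1) k)"

lemma binom_composition_fps_Suc_Suc_Suc:
  "binom_composition_fps (Suc m) (Suc k) (Suc r) =
     (\<Sum>ks\<in>compositions (k + r) r. kt_fps (ks @ [Suc m])) +
     (\<Sum>ks\<in>compositions (k + r) (Suc r).
        of_nat ((last ks + m) choose m) * kt_fps (butlast ks @ [last ks + Suc m]))"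
proof -
  have "binom_composition_fps (Suc m) (Suc k) (Suc r) =
      (\<Sum>ks\<in>compositions (Suc (k + r)) (Suc r).
         of_nat ((last ks + m - 1) choose m) * kt_fps (butlast ks @ [last ks + m]))"
    by (simp add: binom_composition_fps_def)
  then show ?thesis
    by (simp add: sum_compositions_Suc_Suc incr_last_def)
qed

text \<open>Pascal's rule for the binomial weights matches the Euler operator lowering the last index.\<close>

lemma fps_theta_binom_composition_fps:
  "fps_theta (binom_composition_fps (Suc (Suc m)) (Suc k) (Suc r)) =
     binom_composition_fps (Suc m) (Suc k) (Suc r) + binom_composition_fps (Suc (Suc m)) k (Suc r)"
proof -
  let ?C = "compositions (k + r) (Suc r)"
  let ?F = "\<lambda>j ks. kt_fps (butlast ks @ [last ks + j])"
  have "fps_theta (\<Sum>ks\<in>?C. of_nat ((last ks + Suc m) choose Suc m) * ?F (Suc (Suc m)) ks) =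
        (\<Sum>ks\<in>?C. of_nat ((last ks + Suc m) choose Suc m) * ?F (Suc m) ks)"
    by (simp only: fps_theta_sum fps_theta_mult fps_theta_of_nat add_Suc_right
        fps_theta_kt_fps_snoc_Suc) simp
  also have "\<dots> = (\<Sum>ks\<in>?C. of_nat ((last ks + m) choose m) * ?F (Suc m) ks)
                 + (\<Sum>ks\<in>?C. of_nat ((last ks + m) choose Suc m) * ?F (Suc m) ks)"
    by (simp add: sum.distrib[symmetric] algebra_simps)
  also have "(\<Sum>ks\<in>?C. of_nat ((last ks + m) choose Suc m) * ?F (Suc m) ks) =
             binom_composition_fps (Suc (Suc m)) k (Suc r)"
    by (simp add: binom_composition_fps_def)
  finally show ?thesis
    unfolding binom_composition_fps_Suc_Suc_Suc
    by (simp add: fps_theta_add fps_theta_sum fps_theta_kt_fps_snoc_Suc algebra_simps)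
qed

lemma duality_lhs_fps_nth_0: "r \<noteq> 0 \<Longrightarrow> fps_nth (duality_lhs_fps m k r) 0 = 0"
  by (simp add: duality_lhs_fps_def binom_composition_fps_def fps_sum_nth kt_fps_nth_0)

lemma duality_rhs_fps_nth_0: "fps_nth (duality_rhs_fps m k r) 0 = 0"
  by (simp add: duality_rhs_fps_def fps_sum_nth ones_snoc_fps_nth_0)

lemma fps_theta_duality_lhs_fps:
  "fps_theta (duality_lhs_fps (Suc (Suc m)) (Suc (Suc k)) (Suc r)) =
     duality_lhs_fps (Suc m) (Suc (Suc k)) (Suc r) + duality_lhs_fps (Suc (Suc m)) (Suc k) (Suc r)"
  by (simp add: duality_lhs_fps_def fps_theta_add fps_theta_mult fps_theta_binom_composition_fps
      algebra_simps del: power_Suc)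

lemma fps_theta_duality_rhs_fps:
  "fps_theta (duality_rhs_fps (Suc m) (Suc k) r) =
     duality_rhs_fps m (Suc k) r + duality_rhs_fps (Suc m) k r"
  by (simp add: duality_rhs_fps_def fps_theta_sum fps_theta_mult fps_theta_ones_snoc_fps
      sum.distrib[symmetric] algebra_simps)

lemma duality_lhs_fps_swap: "duality_lhs_fps m k r = (-1) ^ r * duality_lhs_fps k m r"
proof -
  have "(-1 :: complex fps) ^ r * (-1) ^ r = 1"
    by (simp flip: power_mult_distrib)
  then show ?thesis
    by (simp add: duality_lhs_fps_def algebra_simps)
qed

lemma duality_rhs_fps_swap:
  assumes "r \<noteq> 0"
  shows "duality_rhs_fps m k r = (-1) ^ r * duality_rhs_fps k m r"
proof -
  have "duality_rhs_fps k m r =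
        (\<Sum>j=1..r-1. (-1) ^ (r - j - 1) * ones_snoc_fps (j - 1) k * ones_snoc_fps (r - 1 - j) m)"
    unfolding duality_rhs_fps_def
    by (subst sum.atLeastAtMost_rev) (rule sum.cong[OF refl], use assms in \<open>auto simp: Suc_diff_le\<close>)
  also have "(-1) ^ r * \<dots> = duality_rhs_fps m k r"
    unfolding duality_rhs_fps_def sum_distrib_left
  proof (rule sum.cong[OF refl])
    fix j assume j: "j \<in> {1..r-1}"
    then have "(-1 :: complex fps) ^ r * (-1) ^ (r - j - 1) = (-1) ^ (j - 1)"
      by (simp add: power_add[symmetric] minus_one_power_iff) presburger
    then show "(-1) ^ r *
          ((-1) ^ (r - j - 1) * ones_snoc_fps (j - 1) k * ones_snoc_fps (r - 1 - j) m) =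
               (-1) ^ (j - 1) * ones_snoc_fps (r - 1 - j) m * ones_snoc_fps (j - 1) k"
      by (simp add: algebra_simps)
  qed
  finally show ?thesis by simp
qed

lemma duality_fps_1:
  assumes "k \<noteq> 0" and "r \<noteq> 0"
  shows "duality_lhs_fps 1 k r = duality_rhs_fps 1 k r"
proof -
  obtain p q where pq: "k = Suc p" "r = Suc q"
    using assms by (cases k; cases r) auto
  have "binom_composition_fps 1 (Suc p) (Suc q) = composition_fps (Suc q) (p + q + 1)"
    unfolding binom_composition_fps_def composition_fps_def
    by (rule sum.cong) (auto dest: compositions_Suc_nonempty)
  also have "\<dots> = ones_convolution_fps q (Suc p)"
    by (rule composition_fps_eq_ones_convolution)
  also have "\<dots> = (\<Sum>i<q. (-1) ^ i * ones_fps (q - i) * ones_snoc_fps i (Suc p))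
                   + (-1) ^ q * ones_snoc_fps q (Suc p)"
    by (simp add: ones_convolution_fps_def lessThan_Suc_atMost[symmetric] ones_fps_0)
  finally have "binom_composition_fps 1 (Suc p) (Suc q) =
      duality_rhs_fps 1 (Suc p) (Suc q) + (-1) ^ q * ones_snoc_fps q (Suc p)"
    by (simp add: duality_rhs_fps_def sum.atLeast1_atMost_eq ones_snoc_fps_1 Suc_diff_Suc)
  moreover have "binom_composition_fps (Suc p) 1 (Suc q) = ones_snoc_fps q (Suc p)"
    by (simp add: binom_composition_fps_def compositions_self ones_snoc_fps_def butlast_conv_take
        del: replicate_Suc)
  ultimately show ?thesis
    by (simp add: pq duality_lhs_fps_def)
qed

theorem duality_fps:
  assumes "m \<noteq> 0" and "k \<noteq> 0" and "r \<noteq> 0"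
  shows "duality_lhs_fps m k r = duality_rhs_fps m k r"
  using assms
proof (induction "m + k" arbitrary: m k rule: less_induct)
  case less
  consider "m = 1" | "k = 1" | m' k' where "m = Suc (Suc m')" "k = Suc (Suc k')"
    using less.prems by (metis One_nat_def not0_implies_Suc)
  then show ?case
  proof cases
    case 1
    with less.prems duality_fps_1 show ?thesis by blast
  next
    case 2
    have "duality_lhs_fps m k r = (-1) ^ r * duality_lhs_fps 1 m r"
      using 2 by (simp only: duality_lhs_fps_swap[of m])
    also have "\<dots> = (-1) ^ r * duality_rhs_fps 1 m r"
      by (simp only: duality_fps_1[OF less.prems(1,3)])
    also have "\<dots> = duality_rhs_fps m k r"
      using 2 by (simp only: duality_rhs_fps_swap[OF less.prems(3), of m 1])
    finally show ?thesis .
  next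
    case 3
    obtain q where q: "r = Suc q" using less.prems by (cases r) auto
    show ?thesis
    proof (rule fps_eqI_theta)
      show "fps_theta (duality_lhs_fps m k r) = fps_theta (duality_rhs_fps m k r)"
        using less.hyps[of "Suc m'" k] less.hyps[of m "Suc k'"] less.prems
        by (simp add: 3 q fps_theta_duality_lhs_fps fps_theta_duality_rhs_fps)
    qed (simp add: less.prems duality_lhs_fps_nth_0 duality_rhs_fps_nth_0)
  qed
qed

section \<open>Convergence in the unit disc\<close>

lemma fps_conv_radius_twice_odd_fps: "1 \<le> fps_conv_radius twice_odd_fps"
  unfolding fps_conv_radius_def
proof (rule conv_radius_geI_ex')
  fix r :: real assume r: "0 < r" "ereal r < 1"
  then have "summable (\<lambda>n. 2 * r ^ n)"
    by (intro summable_mult summable_geometric) auto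
  then show "summable (\<lambda>n. fps_nth twice_odd_fps n * of_real r ^ n)"
    by (rule summable_comparison_test[rotated])
      (use r in \<open>auto simp: twice_odd_fps_def norm_mult norm_power\<close>)
qed

lemma kt_coeff_snoc_Suc_le: "kt_coeff (ks @ [Suc k]) N \<le> kt_coeff (ks @ [k]) N"
proof (cases "N = 0")
  case False
  define X where "X = 2 / real N ^ k * (\<Sum>M<N. kt_coeff ks M)"
  have "0 \<le> X"
    by (simp add: X_def sum_nonneg kt_coeff_nonneg)
  moreover have "1 \<le> real N"
    using False by simp
  ultimately have "X / real N \<le> X"
    by (simp add: divide_le_eq mult_le_cancel_left1)
  then show ?thesis
    by (simp add: kt_coeff_snoc X_def mult.commute)
qed (simp add: kt_coeff_snoc)

lemma fps_conv_radius_kt_fps: "1 \<le> fps_conv_radius (kt_fps ks)"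
proof (induction ks rule: rev_induct)
  case (snoc k ks)
  show ?case
  proof (induction k)
    case 0
    have "1 \<le> min (fps_conv_radius twice_odd_fps) (fps_conv_radius (kt_fps ks))"
      using fps_conv_radius_twice_odd_fps snoc by simp
    also have "\<dots> \<le> fps_conv_radius (kt_fps (ks @ [0]))"
      unfolding kt_fps_snoc_0 by (rule fps_conv_radius_mult)
    finally show ?case .
  next
    case (Suc k)
    also have "fps_conv_radius (kt_fps (ks @ [k])) \<le> fps_conv_radius (kt_fps (ks @ [Suc k]))"
      by (rule fps_conv_radius_le_if_norm_le)
        (simp add: kt_fps_def kt_coeff_snoc_Suc_le kt_coeff_nonneg)
    finally show ?case .
  qed
qed (simp add: kt_fps_Nil)

lemma norm_less_fps_conv_radius_kt_fps:
  "norm z < 1 \<Longrightarrow> ereal (norm z) < fps_conv_radius (kt_fps ks)"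
  using fps_conv_radius_kt_fps[of ks] by (meson ereal_less_eq(3) less_le_trans ereal_less(3))

section \<open>The series of \<open>A\<close> as a sum over index tuples\<close>

definition last0 :: "nat list \<Rightarrow> nat" where
  "last0 ns = (if ns = [] then 0 else last ns)"

definition kt_fiber :: "nat \<Rightarrow> nat \<Rightarrow> nat list set" where
  "kt_fiber r N = {ns \<in> KT_indices r. last0 ns = N}"

definition kt_weight :: "nat list \<Rightarrow> nat list \<Rightarrow> real" where
  "kt_weight ks ns = 1 / (\<Prod>i<length ks. real (ns ! i) ^ (ks ! i))"

lemma le_last0_if_KT_indices: "ns \<in> KT_indices r \<Longrightarrow> n \<in> set ns \<Longrightarrow> n \<le> last0 ns"
proof (induction ns arbitrary: r rule: rev_induct)
  case (snoc x xs)
  then show ?case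
    by (auto simp: KT_indices_def last0_def sorted_wrt_append)
qed simp

lemma KT_indices_0: "KT_indices 0 = {[]}"
  by (auto simp: KT_indices_def)

lemma KT_indices_Suc_nonempty: "ns \<in> KT_indices (Suc r) \<Longrightarrow> ns \<noteq> []"
  by (auto simp: KT_indices_def)

lemma snoc_in_KT_indices_Suc_iff:
  "ns @ [n] \<in> KT_indices (Suc r) \<longleftrightarrow>
     ns \<in> KT_indices r \<and> last0 ns < n \<and> n mod 2 = Suc r mod 2"
proof (cases "length ns = r")
  case True
  have "(\<forall>x\<in>set ns. x < n) \<and> 1 \<le> n \<longleftrightarrow> last0 ns < n" if "ns \<in> KT_indices r"
    using that le_last0_if_KT_indices[OF that]
    by (auto simp: last0_def KT_indices_def) (meson less_le_trans not_less)
  moreover have "(\<forall>i<Suc r. (ns @ [n]) ! i mod 2 = (i + 1) mod 2) \<longleftrightarrow>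
      (\<forall>i<r. ns ! i mod 2 = (i + 1) mod 2) \<and> n mod 2 = Suc r mod 2"
    using True by (auto simp: less_Suc_eq nth_append)
  ultimately show ?thesis
    using True by (auto simp: KT_indices_def sorted_wrt_append)
qed (auto simp: KT_indices_def)

lemma finite_KT_indices_last0_le: "finite {ns \<in> KT_indices r. last0 ns \<le> N}"
proof (rule finite_subset)
  show "{ns \<in> KT_indices r. last0 ns \<le> N} \<subseteq> {ns. set ns \<subseteq> {..N} \<and> length ns = r}"
    using le_last0_if_KT_indices by (fastforce simp: KT_indices_def)
qed (rule finite_lists_length_eq, simp)

lemma finite_kt_fiber: "finite (kt_fiber r N)"
  by (rule finite_subset[OF _ finite_KT_indices_last0_le[of r N]]) (auto simp: kt_fiber_def)

lemma kt_fiber_Suc: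
  "kt_fiber (Suc r) N =
     (\<lambda>ns. ns @ [N]) ` {ns \<in> KT_indices r. last0 ns < N \<and> N mod 2 = Suc r mod 2}"
proof (intro equalityI subsetI)
  fix ns assume "ns \<in> kt_fiber (Suc r) N"
  then have ns: "ns \<in> KT_indices (Suc r)" "last0 ns = N"
    by (auto simp: kt_fiber_def)
  then have "ns = butlast ns @ [N]"
    using KT_indices_Suc_nonempty[OF ns(1)] by (simp add: last0_def) (metis append_butlast_last_id)
  with ns(1) show "ns \<in> (\<lambda>ns. ns @ [N]) ` {ns \<in> KT_indices r. last0 ns < N \<and> N mod 2 = Suc r mod 2}"
    using snoc_in_KT_indices_Suc_iff[of "butlast ns" N r] by auto
qed (auto simp: kt_fiber_def snoc_in_KT_indices_Suc_iff last0_def)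

lemma kt_weight_snoc:
  "length ns = length ks \<Longrightarrow> kt_weight (ks @ [k]) (ns @ [N]) = kt_weight ks ns / real N ^ k"
  by (simp add: kt_weight_def nth_append)

lemma kt_coeff_eq_sum_kt_fiber:
  "kt_coeff ks N = 2 ^ length ks * (\<Sum>ns\<in>kt_fiber (length ks) N. kt_weight ks ns)"
proof (induction ks arbitrary: N rule: rev_induct)
  case Nil
  have "kt_fiber 0 N = (if N = 0 then {[]} else {})"
    by (auto simp: kt_fiber_def KT_indices_0 last0_def)
  then show ?case
    by (simp add: kt_coeff_Nil kt_weight_def)
next
  case (snoc k ks)
  define r where "r = length ks"
  define G where "G = {ns \<in> KT_indices r. last0 ns < N}"
  have "(\<Sum>ns\<in>kt_fiber (Suc r) N. kt_weight (ks @ [k]) ns) =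
        (\<Sum>ns\<in>{ns \<in> G. N mod 2 = Suc r mod 2}. kt_weight (ks @ [k]) (ns @ [N]))"
    unfolding kt_fiber_Suc G_def by (simp add: sum.reindex inj_on_def)
  also have "\<dots> = (if N mod 2 = Suc r mod 2 then (\<Sum>ns\<in>G. kt_weight ks ns) / real N ^ k else 0)"
    by (auto simp: G_def kt_weight_snoc r_def KT_indices_def sum_divide_distrib intro!: sum.cong)
  also have "(\<Sum>ns\<in>G. kt_weight ks ns) = (\<Sum>M<N. \<Sum>ns\<in>{ns \<in> G. last0 ns = M}. kt_weight ks ns)"
    by (rule sum.group[symmetric])
      (auto simp: G_def intro!: finite_subset[OF _ finite_KT_indices_last0_le[of r N]])
  also have "\<dots> = (\<Sum>M<N. \<Sum>ns\<in>kt_fiber r M. kt_weight ks ns)"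
    by (intro sum.cong refl) (auto simp: G_def kt_fiber_def)
  finally show ?case
    by (simp add: kt_coeff_snoc snoc.IH r_def[symmetric] sum_distrib_left sum_divide_distrib
        mult.assoc)
qed

lemma kt_weight_nonneg: "0 \<le> kt_weight ks ns"
  by (simp add: kt_weight_def prod_nonneg)

lemma KT_A_eq_eval_fps:
  assumes "norm z < 1"
  shows "KT_A ks z = eval_fps (kt_fps ks) z"
proof -
  define r where "r = length ks"
  define f where "f ns = 2 ^ r * z ^ last0 ns * of_real (kt_weight ks ns)" for ns
  have "(\<Sum>ns\<in>kt_fiber r N. f ns) = (\<Sum>ns\<in>kt_fiber r N. 2 ^ r * z ^ N * of_real (kt_weight ks ns))"
    for N by (rule sum.cong) (simp_all add: f_def kt_fiber_def)
  then have fiber_sum: "(\<Sum>ns\<in>kt_fiber r N. f ns) = fps_nth (kt_fps ks) N * z ^ N" for N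
    by (simp add: kt_fps_def kt_coeff_eq_sum_kt_fiber r_def sum_distrib_left mult_ac)
  have "(\<Sum>ns\<in>kt_fiber r N. norm (f ns)) = (\<Sum>ns\<in>kt_fiber r N. 2 ^ r * norm z ^ N * kt_weight ks ns)"
    for N by (rule sum.cong)
      (simp_all add: f_def kt_fiber_def norm_mult norm_power kt_weight_nonneg)
  moreover have "norm (fps_nth (kt_fps ks) N * z ^ N) = kt_coeff ks N * norm z ^ N" for N
    by (simp add: kt_fps_def norm_mult norm_power kt_coeff_nonneg)
  ultimately have norm_fiber_sum:
      "(\<Sum>ns\<in>kt_fiber r N. norm (f ns)) = norm (fps_nth (kt_fps ks) N * z ^ N)" for N
    by (simp add: kt_coeff_eq_sum_kt_fiber r_def sum_distrib_left sum_distrib_right mult_ac)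
  have "(f has_sum eval_fps (kt_fps ks) z) (KT_indices r)"
    using has_sum_finite_fibers[of "KT_indices r" last0 f] finite_kt_fiber fiber_sum norm_fiber_sum
      norm_less_fps_conv_radius_kt_fps[OF assms]
    by (simp add: kt_fiber_def eval_fps_def norm_summable_fps)
  moreover have "f = (\<lambda>ns. 2 ^ r * (z ^ (if ns = [] then 0 else last ns) /
      (\<Prod>i<length ks. of_nat (ns ! i) ^ (ks ! i))))"
    by (simp add: fun_eq_iff f_def last0_def kt_weight_def)
  ultimately show ?thesis
    unfolding KT_A_def r_def[symmetric] infsum_cmult_right'[symmetric] by (simp add: infsumI)
qed

lemma
  assumes "norm z < 1"
  shows fps_conv_radius_binom_composition_fps:
          "ereal (norm z) < fps_conv_radius (binom_composition_fps m k r)"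
    and eval_binom_composition_fps:
          "eval_fps (binom_composition_fps m k r) z =
             (\<Sum>ks\<in>compositions (k + r - 1) r. of_nat ((last ks + m - 2) choose (m - 1)) *
                KT_A (butlast ks @ [last ks + m - 1]) z)"
proof -
  have term_radius: "ereal (norm z) < fps_conv_radius (fps_const (of_nat c) * kt_fps ks)" for c ks
    by (intro fps_conv_radius_mult_gt norm_less_fps_conv_radius_kt_fps assms) simp
  then show "ereal (norm z) < fps_conv_radius (binom_composition_fps m k r)"
    unfolding binom_composition_fps_def fps_of_nat[symmetric] by (intro fps_conv_radius_sum_gt)
  show "eval_fps (binom_composition_fps m k r) z =
      (\<Sum>ks\<in>compositions (k + r - 1) r. of_nat ((last ks + m - 2) choose (m - 1)) *
         KT_A (butlast ks @ [last ks + m - 1]) z)"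
    unfolding binom_composition_fps_def fps_of_nat[symmetric]
    using term_radius norm_less_fps_conv_radius_kt_fps[OF assms]
    by (simp add: eval_fps_sum eval_fps_mult KT_A_eq_eval_fps[OF assms])
qed
lemma eval_duality_rhs_fps:
  assumes "norm z < 1"
  shows "eval_fps (duality_rhs_fps m k r) z = (\<Sum>j=1..r-1. (-1) ^ (j - 1) *
           KT_A (replicate (r - 1 - j) 1 @ [m]) z * KT_A (replicate (j - 1) 1 @ [k]) z)"
proof -
  have radius: "ereal (norm z) < fps_conv_radius (fps_const c * ones_snoc_fps a b)" for c a b
    unfolding ones_snoc_fps_def
    by (intro fps_conv_radius_mult_gt norm_less_fps_conv_radius_kt_fps assms) simp
  then show ?thesis
    unfolding duality_rhs_fps_def fps_neg_one_power
    using norm_less_fps_conv_radius_kt_fps[OF assms]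
    by (simp add: eval_fps_sum fps_conv_radius_mult_gt eval_fps_mult ones_snoc_fps_def
        KT_A_eq_eval_fps[OF assms])
qed

theorem mainTheorem15:
  fixes m k r :: nat and z :: complex
  assumes "1 \<le> m" and "1 \<le> k" and "1 \<le> r" and "norm z < 1"
  shows "(\<Sum>ks\<in>compositions (k + r - 1) r.
            of_nat ((last ks + m - 2) choose (m - 1)) * KT_A (butlast ks @ [last ks + m - 1]) z)
       + (-1) ^ r * (\<Sum>ks\<in>compositions (m + r - 1) r.
            of_nat ((last ks + k - 2) choose (k - 1)) * KT_A (butlast ks @ [last ks + k - 1]) z)
       = (\<Sum>j=1..r-1. (-1) ^ (j - 1) *
            KT_A (replicate (r - 1 - j) 1 @ [m]) z * KT_A (replicate (j - 1) 1 @ [k]) z)"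
proof -
  have "eval_fps (duality_lhs_fps m k r) z = eval_fps (duality_rhs_fps m k r) z"
    using assms(1-3) by (simp add: duality_fps)
  moreover have "eval_fps (duality_lhs_fps m k r) z =
      eval_fps (binom_composition_fps m k r) z
        + (-1) ^ r * eval_fps (binom_composition_fps k m r) z"
    using fps_conv_radius_binom_composition_fps[OF assms(4)]
    unfolding duality_lhs_fps_def fps_neg_one_power
    by (simp add: eval_fps_add eval_fps_mult fps_conv_radius_mult_gt)
  ultimately show ?thesis
    by (simp add: eval_binom_composition_fps[OF assms(4)] eval_duality_rhs_fps[OF assms(4)])
qed

end
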